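(* Let $G=(V,E)$ be a finite connected graph and $A$ an irreducible, lazy transition matrix on $V$, with $E_A=\{(i,j)\in V\times V:A(i,j)>0\}$. Let $i\in V$. Then there exist a finite integer $s(i)$ and a sequence $(i=i_1,i_2,\dots,i_{s(i)})\in V^{s(i)}$ with $(i_j,i_{j+1})\in E_A$ for all $j$, such that the configuration $$x^{(i)}:=T_{i_{s(i)}}\cdots T_{i_1}(T_i)^{s(i)}x$$ is the same for every initial configuration $x\in S^{(i)}$, and satisfies $\min_{j\in V}x^{(i)}_j\ge-2s(i)$.
   Context: $S=(-\mathbb{N}_0)^V$ is the space of height profiles seen from the maximum, and $S^{(i)}=\{x\in S:x_i=0\}$. For $x\in S$ and $i\in V$, $T_ix\in S$ is obtained by first setting $x'_i=\max\{x_k:\operatorname{dist}(k,i)\le1\}+1$, $x'_j=x_j$ for $j\ne i$ (dist the graph distance in $G$), and then $(T_ix)_j=x'_j-\max_kx'_k$. Irreducible: for all $v\neq v'$ there is $s$ with $A^s(v,v')>0$; lazy: $A(v,v)>0$ for all $v$. *)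

theory Defs
  imports Complex_Main
begin

definition simple_graph :: "('v \<Rightarrow> 'v \<Rightarrow> bool) \<Rightarrow> bool" where
  "simple_graph E \<longleftrightarrow> (\<forall>u v. E u v \<longrightarrow> E v u) \<and> (\<forall>v. \<not> E v v)"

definition connected_graph :: "('v \<Rightarrow> 'v \<Rightarrow> bool) \<Rightarrow> bool" where
  "connected_graph E \<longleftrightarrow> (\<forall>u v. (u, v) \<in> {(a, b). E a b}\<^sup>*)"

definition transition_matrix :: "('v::finite \<Rightarrow> 'v \<Rightarrow> real) \<Rightarrow> bool" where
  "transition_matrix A \<longleftrightarrow> (\<forall>u v. A u v \<ge> 0) \<and> (\<forall>u. (\<Sum>v\<in>UNIV. A u v) = 1)"

fun matpow :: "('v::finite \<Rightarrow> 'v \<Rightarrow> real) \<Rightarrow> nat \<Rightarrow> 'v \<Rightarrow> 'v \<Rightarrow> real" where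
  "matpow A 0 = (\<lambda>u v. if u = v then 1 else 0)"
| "matpow A (Suc n) = (\<lambda>u v. \<Sum>k\<in>UNIV. matpow A n u k * A k v)"

definition irreducible_matrix :: "('v::finite \<Rightarrow> 'v \<Rightarrow> real) \<Rightarrow> bool" where
  "irreducible_matrix A \<longleftrightarrow> (\<forall>v v'. v \<noteq> v' \<longrightarrow> (\<exists>s. matpow A s v v' > 0))"

definition lazy_matrix :: "('v \<Rightarrow> 'v \<Rightarrow> real) \<Rightarrow> bool" where
  "lazy_matrix A \<longleftrightarrow> (\<forall>v. A v v > 0)"

text \<open>Height profiles seen from the maximum: S = (-N_0)^V, and S^(i).\<close>

definition Sconf :: "('v \<Rightarrow> int) set" where
  "Sconf = {x. \<forall>j. x j \<le> 0}"

definition Sconf_at :: "'v \<Rightarrow> ('v \<Rightarrow> int) set" where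
  "Sconf_at i = {x \<in> Sconf. x i = 0}"

definition Tmap :: "('v::finite \<Rightarrow> 'v \<Rightarrow> bool) \<Rightarrow> 'v \<Rightarrow> ('v \<Rightarrow> int) \<Rightarrow> ('v \<Rightarrow> int)" where
  "Tmap E i x =
     (let x' = x(i := Max {x k | k. k = i \<or> E k i} + 1)
      in (\<lambda>j. x' j - Max (range x')))"

end

theory Submission
  imports Defs
begin

text \<open>
Write T_v as an unnormalised raise of site v followed by a normalisation. Raising commutes
with adding constants, so any composite of the T_v is one normalisation applied after the
corresponding raises. From x \<in> S^(i), s raises at i produce x(i := s), which exceeds every
other site by at least s. Now follow a walk of length s: a site becomes determined when it is
raised while its closed neighbourhood contains a determined site. Determined sites stay
\<ge> s, while undetermined ones gain at most one per step and stay below s, so the maximum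
over such a neighbourhood is attained at determined sites and the new value is independent
of x. Connectivity of G together with irreducibility and laziness of A yields a walk in E_A
from i along which every site becomes determined.
\<close>

definition closed_nbhd :: "('v \<Rightarrow> 'v \<Rightarrow> bool) \<Rightarrow> 'v \<Rightarrow> 'v set" where
  "closed_nbhd E v = {k. k = v \<or> E k v}"

definition raise :: "('v::finite \<Rightarrow> 'v \<Rightarrow> bool) \<Rightarrow> 'v \<Rightarrow> ('v \<Rightarrow> int) \<Rightarrow> 'v \<Rightarrow> int" where
  "raise E v z = z(v := Max (z ` closed_nbhd E v) + 1)"

definition normalise :: "('v::finite \<Rightarrow> int) \<Rightarrow> 'v \<Rightarrow> int" where
  "normalise z = (\<lambda>j. z j - Max (range z))"

lemma finite_closed_nbhd [simp]: "finite (closed_nbhd E (v::'v::finite))"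
  by simp

lemma self_in_closed_nbhd [simp]: "v \<in> closed_nbhd E v"
  by (simp add: closed_nbhd_def)

lemma closed_nbhd_nonempty [simp]: "closed_nbhd E v \<noteq> {}"
  by (auto simp: closed_nbhd_def)

lemma Tmap_eq_normalise_raise: "Tmap E v z = normalise (raise E v z)"
proof -
  have "{z k | k. k = v \<or> E k v} = z ` closed_nbhd E v"
    by (auto simp: closed_nbhd_def)
  then show ?thesis
    by (simp add: Tmap_def raise_def normalise_def Let_def)
qed

lemma raise_add_const: "raise E v (\<lambda>j. z j + c) = (\<lambda>j. raise E v z j + c)"
proof -
  have "Max ((\<lambda>j. z j + c) ` closed_nbhd E v) = Max (z ` closed_nbhd E v) + c"
    by (rule Max_add_commute) (auto simp: closed_nbhd_def)
  then show ?thesis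
    by (auto simp: raise_def)
qed

lemma normalise_add_const: "normalise (\<lambda>j. z j + c) = normalise z"
proof -
  have "Max (range (\<lambda>j. z j + c)) = Max (range z) + c"
    by (rule Max_add_commute) auto
  then show ?thesis
    by (simp add: normalise_def)
qed

lemma Tmap_normalise: "Tmap E v (normalise z) = normalise (raise E v z)"
proof -
  have "normalise z = (\<lambda>j. z j + - Max (range z))"
    by (simp only: normalise_def diff_conv_add_uminus)
  then show ?thesis
    by (simp add: Tmap_eq_normalise_raise raise_add_const normalise_add_const)
qed

lemma fold_Tmap_normalise: "fold (Tmap E) vs (normalise z) = normalise (fold (raise E) vs z)"
  by (induction vs arbitrary: z) (simp_all add: Tmap_normalise)

lemma funpow_Tmap_normalise: "(Tmap E v ^^ n) (normalise z) = normalise ((raise E v ^^ n) z)"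
  by (induction n) (simp_all add: Tmap_normalise)

lemma normalise_Sconf_at:
  assumes "x \<in> Sconf_at i"
  shows "normalise x = x"
proof -
  have "Max (range x) = 0"
    using assms by (intro Max_eqI) (auto simp: Sconf_at_def Sconf_def)
  then show ?thesis
    by (simp add: normalise_def)
qed

lemma funpow_raise_Sconf_at: "x \<in> Sconf_at i \<Longrightarrow> (raise E i ^^ n) x = x(i := int n)"
proof (induction n)
  case 0
  then show ?case by (auto simp: Sconf_at_def)
next
  case (Suc n)
  have "Max (x(i := int n) ` closed_nbhd E i) = int n"
    using Suc.prems by (intro Max_eqI) (auto simp: Sconf_at_def Sconf_def intro: order_trans[of _ 0])
  have "(raise E i ^^ Suc n) x = raise E i (x(i := int n))"
    using Suc by (simp del: fun_upd_apply)
  also have "\<dots> = x(i := int (Suc n))"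
    unfolding raise_def using \<open>Max _ = int n\<close> by (simp add: add.commute)
  finally show ?case .
qed

lemma fold_Tmap_funpow_Sconf_at:
  "x \<in> Sconf_at i \<Longrightarrow>
    fold (Tmap E) vs ((Tmap E i ^^ n) x) = normalise (fold (raise E) vs (x(i := int n)))"
  by (metis normalise_Sconf_at funpow_Tmap_normalise funpow_raise_Sconf_at fold_Tmap_normalise)

lemma normalise_ge:
  assumes "\<And>j. S \<le> z j \<and> z j \<le> S + k"
  shows "- k \<le> normalise (z::'v::finite \<Rightarrow> int) j"
proof -
  have "Max (range z) \<le> S + k"
    using assms by (simp add: Max_le_iff)
  then show ?thesis
    using assms[of j] unfolding normalise_def by linarith
qed

definition spread :: "('v \<Rightarrow> 'v \<Rightarrow> bool) \<Rightarrow> 'v \<Rightarrow> 'v set \<Rightarrow> 'v set" where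
  "spread E v G = (if closed_nbhd E v \<inter> G = {} then G else insert v G)"

text \<open>G is the set of determined sites, S the height reached at i, and k the bound on the
undetermined ones; only z needs the global upper bound, which bounds the final profile.\<close>

definition coupled :: "int \<Rightarrow> int \<Rightarrow> 'v set \<Rightarrow> ('v \<Rightarrow> int) \<Rightarrow> ('v \<Rightarrow> int) \<Rightarrow> bool" where
  "coupled S k G z z' \<longleftrightarrow>
     (\<forall>j\<in>G. z j = z' j \<and> S \<le> z j) \<and> (\<forall>j. j \<notin> G \<longrightarrow> z j \<le> k \<and> z' j \<le> k) \<and> (\<forall>j. z j \<le> S + k)"

lemma coupled_Max_eq:
  assumes cp: "coupled S k G z z'" and "k < S" and N: "finite N" and u: "u \<in> N \<inter> G"
  shows "Max (z ` N) = Max (z' ` N) \<and> S \<le> Max (z ` N)"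
proof -
  have attained: "\<exists>a\<in>N \<inter> G. Max (f ` N) = f a"
    if "\<forall>j\<in>G. S \<le> f j" "\<forall>j. j \<notin> G \<longrightarrow> f j \<le> k" for f :: "_ \<Rightarrow> int"
  proof -
    have "Max (f ` N) \<in> f ` N"
      using N u by (intro Max_in) auto
    then obtain a where a: "a \<in> N" "Max (f ` N) = f a"
      by auto
    have "f u \<le> f a"
      using a N u by (metis IntD1 Max_ge finite_imageI imageI)
    then have "a \<in> G"
      using that u \<open>k < S\<close> by force
    then show ?thesis using a by blast
  qed
  have zG: "\<forall>j\<in>G. S \<le> z j" and "\<forall>j. j \<notin> G \<longrightarrow> z j \<le> k"
    using cp by (auto simp: coupled_def)
  then obtain a where a: "a \<in> N \<inter> G" "Max (z ` N) = z a"
    using attained by blast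
  have "\<forall>j\<in>G. S \<le> z' j" and "\<forall>j. j \<notin> G \<longrightarrow> z' j \<le> k"
    using cp by (auto simp: coupled_def)
  then obtain a' where a': "a' \<in> N \<inter> G" "Max (z' ` N) = z' a'"
    using attained by blast
  have agree: "\<forall>j\<in>G. z j = z' j"
    using cp by (simp add: coupled_def)
  have "z a \<le> Max (z' ` N)"
    using a agree N by simp
  moreover have "z' a' \<le> Max (z ` N)"
    using a' agree N by (metis IntD1 IntD2 Max_ge finite_imageI imageI)
  ultimately have "Max (z ` N) = Max (z' ` N)"
    using a a' by simp
  moreover have "S \<le> Max (z ` N)"
    using a zG by simp
  ultimately show ?thesis ..
qed

lemma coupled_Max_le:
  assumes cp: "coupled S k G z z'" and N: "finite N" "N \<noteq> {}" "N \<inter> G = {}"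
  shows "Max (z ` N) \<le> k \<and> Max (z' ` N) \<le> k"
  using cp N by (auto simp: coupled_def)

lemma coupled_raise:
  assumes cp: "coupled S k G z z'" and "k < S"
  shows "coupled S (k + 1) (spread E v G) (raise E v z) (raise E v z')"
proof -
  have below: "z j \<le> S + (k + 1)" for j
  proof -
    have "z j \<le> S + k"
      using cp by (simp add: coupled_def)
    then show ?thesis by linarith
  qed
  show ?thesis
  proof (cases "closed_nbhd E v \<inter> G = {}")
    case True
    then have "Max (z ` closed_nbhd E v) \<le> k \<and> Max (z' ` closed_nbhd E v) \<le> k"
      by (intro coupled_Max_le[OF cp]) auto
    moreover have "v \<notin> G"
      using True by (metis disjoint_iff self_in_closed_nbhd)
    ultimately show ?thesis
      using cp True below by (auto simp: coupled_def spread_def raise_def)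
  next
    case False
    then obtain u where "u \<in> closed_nbhd E v \<inter> G"
      by blast
    then have "Max (z ` closed_nbhd E v) = Max (z' ` closed_nbhd E v) \<and> S \<le> Max (z ` closed_nbhd E v)"
      by (rule coupled_Max_eq[OF cp \<open>k < S\<close> finite_closed_nbhd])
    moreover have "Max (z ` closed_nbhd E v) \<le> S + k"
      using cp by (auto simp: coupled_def)
    ultimately show ?thesis
      using cp False below by (auto simp: coupled_def spread_def raise_def)
  qed
qed

lemma coupled_fold_raise:
  assumes "coupled S k G z z'" and "k + int (length vs) \<le> S"
  shows "coupled S (k + int (length vs)) (fold (spread E) vs G) (fold (raise E) vs z) (fold (raise E) vs z')"
  using assms
proof (induction vs arbitrary: G z z' k)
  case Nil
  then show ?case by simp
next
  case (Cons v vs)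
  then have "coupled S (k + 1) (spread E v G) (raise E v z) (raise E v z')"
    by (intro coupled_raise) auto
  from Cons.IH[OF this] Cons.prems(2) show ?case
    by (simp add: add.assoc)
qed

lemma coupled_UNIV:
  assumes "coupled S k UNIV z z'"
  shows "z' = z \<and> (\<forall>j. S \<le> z j \<and> z j \<le> S + k)"
proof -
  have "z j = z' j" "S \<le> z j" "z j \<le> S + k" for j
    using assms unfolding coupled_def by blast+
  then show ?thesis
    by (metis ext)
qed

lemma coupled_Sconf:
  "x \<in> Sconf \<Longrightarrow> x' \<in> Sconf \<Longrightarrow> 0 \<le> S \<Longrightarrow> coupled S 0 {i} (x(i := S)) (x'(i := S))"
  by (auto simp: coupled_def Sconf_def intro: order_trans)

lemma subset_spread: "G \<subseteq> spread E v G"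
  by (auto simp: spread_def)

lemma subset_fold_spread: "G \<subseteq> fold (spread E) vs G"
  by (induction vs arbitrary: G) (simp, metis fold_simps(2) subset_spread order_trans)

lemma rtrancl_leaves_set:
  assumes "(a, b) \<in> r\<^sup>*" and "a \<in> G" and "b \<notin> G"
  shows "\<exists>u v. (u, v) \<in> r \<and> u \<in> G \<and> v \<notin> G"
  using assms by (induction rule: rtrancl_induct) auto

lemma rtrancl_reflexive_walk:
  assumes "(c, w) \<in> {(a, b). R a b}\<^sup>*" and refl: "\<forall>v. R v v"
  shows "\<exists>p. p \<noteq> [] \<and> last p = w \<and> successively R (c # p)"
  using assms(1)
proof (induction rule: rtrancl_induct)
  case base
  show ?case
    using refl by (intro exI[of _ "[c]"]) simp
next
  case (step y z)
  then obtain p where "p \<noteq> []" "last p = y" "successively R (c # p)"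
    by blast
  moreover from this have "successively R ((c # p) @ [z])"
    using step.hyps(2) by (subst successively_append_iff) simp
  ultimately show ?case
    by (intro exI[of _ "p @ [z]"]) simp
qed

lemma walk_enlarges_spread:
  assumes conn: "connected_graph E" and R_conn: "\<forall>u v. (u, v) \<in> {(a, b). R a b}\<^sup>*"
    and refl: "\<forall>v. R v v" and "g \<in> G" and "G \<noteq> UNIV"
  shows "\<exists>p. successively R (c # p) \<and> G \<subset> fold (spread E) p G"
proof -
  obtain w where "w \<notin> G"
    using \<open>G \<noteq> UNIV\<close> by blast
  moreover have "(g, w) \<in> {(a, b). E a b}\<^sup>*"
    using conn by (simp add: connected_graph_def)
  ultimately obtain u w' where uw': "E u w'" "u \<in> G" "w' \<notin> G"
    using rtrancl_leaves_set[OF _ \<open>g \<in> G\<close>] by blast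
  obtain p where p: "p \<noteq> []" "last p = w'" "successively R (c # p)"
    using rtrancl_reflexive_walk[OF R_conn[rule_format] refl] by blast
  have "u \<in> closed_nbhd E w' \<inter> fold (spread E) (butlast p) G"
    using uw' subset_fold_spread[of G E "butlast p"] by (auto simp: closed_nbhd_def)
  then have "w' \<in> fold (spread E) (butlast p @ [w']) G"
    by (auto simp: spread_def)
  then have "w' \<in> fold (spread E) p G"
    using p by (metis append_butlast_last_id)
  then have "G \<subset> fold (spread E) p G"
    using uw'(3) subset_fold_spread[of G E p] by blast
  then show ?thesis
    using p(3) by blast
qed

lemma spreading_walk_exists:
  fixes E R :: "'v::finite \<Rightarrow> 'v \<Rightarrow> bool"
  assumes conn: "connected_graph E" and R_conn: "\<forall>u v. (u, v) \<in> {(a, b). R a b}\<^sup>*"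
    and refl: "\<forall>v. R v v"
  shows "\<exists>ws. ws \<noteq> [] \<and> hd ws = i \<and> successively R ws \<and> fold (spread E) ws {i} = UNIV"
proof -
  have "\<exists>ws'. ws' \<noteq> [] \<and> hd ws' = i \<and> successively R ws' \<and> fold (spread E) ws' {i} = UNIV"
    if "ws \<noteq> []" "hd ws = i" "successively R ws" for ws
    using that
  proof (induction "card (- fold (spread E) ws {i})" arbitrary: ws rule: less_induct)
    case less
    define G where "G = fold (spread E) ws {i}"
    show ?case
    proof (cases "G = UNIV")
      case True
      then show ?thesis
        using less.prems G_def by blast
    next
      case False
      moreover have "i \<in> G"
        using subset_fold_spread[of "{i}" E ws] G_def by blast
      ultimately obtain p where p: "successively R (last ws # p)" "G \<subset> fold (spread E) p G"
        using walk_enlarges_spread[OF conn R_conn refl] by blast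
      have "successively R (ws @ p)"
        using less.prems p(1) by (auto simp: successively_append_iff successively_Cons)
      moreover have "card (- fold (spread E) (ws @ p) {i}) < card (- G)"
        using p(2) by (intro psubset_card_mono) (auto simp: G_def)
      ultimately show ?thesis
        using less.hyps less.prems G_def by (metis append_is_Nil_conv hd_append)
    qed
  qed
  from this[of "[i]"] show ?thesis
    by simp
qed

lemma matpow_nonneg: "transition_matrix A \<Longrightarrow> 0 \<le> matpow A n u v"
  by (induction n arbitrary: v) (auto simp: transition_matrix_def intro!: sum_nonneg)

lemma matpow_pos_imp_rtrancl:
  assumes A: "transition_matrix A"
  shows "0 < matpow A n u v \<Longrightarrow> (u, v) \<in> {(a, b). 0 < A a b}\<^sup>*"
proof (induction n arbitrary: v)
  case 0
  then show ?case by (auto split: if_splits)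
next
  case (Suc n)
  then obtain k where k: "0 < matpow A n u k * A k v"
    by (metis (no_types, lifting) matpow.simps(2) not_le sum_nonpos)
  moreover have "0 \<le> matpow A n u k" "0 \<le> A k v"
    using matpow_nonneg[OF A] A by (auto simp: transition_matrix_def)
  ultimately have "0 < matpow A n u k" "0 < A k v"
    by (auto simp: zero_less_mult_iff)
  then show ?case
    using Suc.IH by (auto intro: rtrancl_into_rtrancl)
qed

lemma irreducible_matrix_rtrancl:
  assumes "transition_matrix A" and "irreducible_matrix A"
  shows "(u, v) \<in> {(a, b). 0 < A a b}\<^sup>*"
proof (cases "u = v")
  case False
  then obtain n where "0 < matpow A n u v"
    using assms(2) by (auto simp: irreducible_matrix_def)
  then show ?thesis
    by (rule matpow_pos_imp_rtrancl[OF assms(1)])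
qed simp

lemma spreading_walk_determines_profile:
  fixes E :: "'v::finite \<Rightarrow> 'v \<Rightarrow> bool"
  assumes spread: "fold (spread E) ws {i} = UNIV"
  defines "s \<equiv> length ws"
  shows "\<exists>c. (\<forall>x \<in> Sconf_at i. fold (Tmap E) ws ((Tmap E i ^^ s) x) = c) \<and> (\<forall>j. - int s \<le> c j)"
proof -
  define z0 :: "'v \<Rightarrow> int" where "z0 = (\<lambda>_. 0)(i := int s)"
  have "coupled (int s) (int s) UNIV (fold (raise E) ws z0) (fold (raise E) ws (x(i := int s)))"
    if "x \<in> Sconf" for x
  proof -
    have "coupled (int s) 0 {i} z0 (x(i := int s))"
      unfolding z0_def using that by (intro coupled_Sconf) (simp_all add: Sconf_def)
    from coupled_fold_raise[OF this, of ws E] show ?thesis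
      by (simp add: spread s_def)
  qed
  then have agree: "fold (raise E) ws (x(i := int s)) = fold (raise E) ws z0"
    and bounds: "\<forall>j. int s \<le> fold (raise E) ws z0 j \<and> fold (raise E) ws z0 j \<le> int s + int s"
    if "x \<in> Sconf" for x
    using that coupled_UNIV by blast+
  have "\<forall>x \<in> Sconf_at i. fold (Tmap E) ws ((Tmap E i ^^ s) x) = normalise (fold (raise E) ws z0)"
    by (simp add: fold_Tmap_funpow_Sconf_at Sconf_at_def agree)
  moreover have "- int s \<le> normalise (fold (raise E) ws z0) j" for j
    using bounds[of "\<lambda>_. 0"] by (intro normalise_ge) (auto simp: Sconf_def)
  ultimately show ?thesis
    by blast
qed

theorem mainTheorem8:
  fixes E :: "'v::finite \<Rightarrow> 'v \<Rightarrow> bool"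
    and A :: "'v \<Rightarrow> 'v \<Rightarrow> real"
    and i :: 'v
  assumes "simple_graph E" and "connected_graph E"
    and "transition_matrix A" and "irreducible_matrix A" and "lazy_matrix A"
  shows "\<exists>s::nat. \<exists>is::'v list. s \<ge> 1 \<and> length is = s \<and> is ! 0 = i
           \<and> (\<forall>j. Suc j < s \<longrightarrow> A (is ! j) (is ! Suc j) > 0)
           \<and> (\<exists>c::'v \<Rightarrow> int.
                (\<forall>x \<in> Sconf_at i. fold (Tmap E) is ((Tmap E i ^^ s) x) = c)
                \<and> (\<forall>j. c j \<ge> - 2 * int s))"
proof -
  have "\<forall>u v. (u, v) \<in> {(a, b). 0 < A a b}\<^sup>*"
    using irreducible_matrix_rtrancl[OF assms(3,4)] by blast
  moreover have "\<forall>v. 0 < A v v"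
    using assms(5) by (simp add: lazy_matrix_def)
  ultimately obtain ws where ws: "ws \<noteq> []" "hd ws = i" "successively (\<lambda>a b. 0 < A a b) ws"
    and spread: "fold (spread E) ws {i} = UNIV"
    using spreading_walk_exists[OF assms(2)] by blast
  obtain c where c: "\<forall>x \<in> Sconf_at i. fold (Tmap E) ws ((Tmap E i ^^ length ws) x) = c"
    and c_ge: "\<forall>j. - int (length ws) \<le> c j"
    using spreading_walk_determines_profile[OF spread] by blast
  have "\<forall>j. Suc j < length ws \<longrightarrow> 0 < A (ws ! j) (ws ! Suc j)"
    using ws(3) successively_nth by blast
  moreover have "- 2 * int (length ws) \<le> c j" for j
    using c_ge[rule_format, of j] by linarith
  ultimately show ?thesis
    using ws(1,2) c by (intro exI[of _ "length ws"] exI[of _ ws] exI[of _ c])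
      (auto simp: hd_conv_nth Suc_le_eq)
qed

end
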